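(* Let $n\ge2$ and $0\le k\le n-2$ be integers, and let $\alpha\in I_{r,n+1}$ with $r>3+k$ and $\alpha_1=n-k$. Then $c^{(n+1)}_\alpha=0$.
   Context: Let $T_1,T_2,\dots$ be indeterminates, $T_\alpha=T_{\alpha_1}\cdots T_{\alpha_d}$. Define linear operators $L,H$ on monomials (constants sent to $0$): $L(T_{\alpha_1}\cdots T_{\alpha_r})=\sum_{1\le i<j\le r}T_{\alpha_1}\cdots T_{\alpha_i+1}\cdots T_{\alpha_j+1}\cdots T_{\alpha_r}$, $H(T_{\alpha_1}\cdots T_{\alpha_r})=-\frac12\sum_{k=1}^{r}\sum_{l=1}^{\alpha_k-1}\binom{\alpha_k}{l}T_{1+l}T_{1+\alpha_k-l}\prod_{i\ne k}T_{\alpha_i}$. For $n\ge2$ let $A_n=-\sum_{k=1}^{n-1}\binom{n}{k}T_{1+k}T_{1+n-k}T_n$; set $R_2=0$, $R_{n+1}=A_n+L(R_n)+H(R_n)$. $I_{r,n}$ is the set of non-increasing $r$-tuples of integers in $\{2,\dots,n-1\}$ with sum $2n$, and $c^{(n)}_\alpha$ is the coefficient of the monomial $T_\alpha$ in $R_n$. *)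

theory Defs
  imports Complex_Main "HOL-Library.Multiset"
begin

text \<open>Polynomials in the indeterminates T_1, T_2, ... with rational coefficients are
represented as finite formal sums: lists of terms (c, xs), where the term stands for
c * T_{xs!0} * ... * T_{xs!(length xs - 1)}.\<close>

type_synonym tpoly = "(rat \<times> nat list) list"

definition coeffT :: "tpoly \<Rightarrow> nat list \<Rightarrow> rat" where
  "coeffT p \<alpha> = sum_list [c. (c, xs) \<leftarrow> p, mset xs = mset \<alpha>]"

definition L_mono :: "rat \<times> nat list \<Rightarrow> tpoly" where
  "L_mono t = (case t of (c, xs) \<Rightarrow>
     [(c, xs[i := xs ! i + 1, j := xs ! j + 1]). i \<leftarrow> [0..<length xs], j \<leftarrow> [Suc i..<length xs]])"

definition L_op :: "tpoly \<Rightarrow> tpoly" where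
  "L_op p = concat (map L_mono p)"

definition H_mono :: "rat \<times> nat list \<Rightarrow> tpoly" where
  "H_mono t = (case t of (c, xs) \<Rightarrow>
     [(- (1/2) * c * of_nat ((xs ! k) choose l),
        (1 + l) # (1 + xs ! k - l) # (take k xs @ drop (Suc k) xs)).
        k \<leftarrow> [0..<length xs], l \<leftarrow> [1..<xs ! k]])"

definition H_op :: "tpoly \<Rightarrow> tpoly" where
  "H_op p = concat (map H_mono p)"

definition A_poly :: "nat \<Rightarrow> tpoly" where
  "A_poly n = [(- of_nat (n choose k), [1 + k, 1 + n - k, n]). k \<leftarrow> [1..<n]]"

text \<open>R_2 = 0 and R_{n+1} = A_n + L(R_n) + H(R_n) for n \<ge> 2 (R_0, R_1 are irrelevant and set to 0).\<close>
fun R_poly :: "nat \<Rightarrow> tpoly" where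
  "R_poly 0 = []"
| "R_poly (Suc n) = (if n < 2 then [] else A_poly n @ L_op (R_poly n) @ H_op (R_poly n))"

definition I_set :: "nat \<Rightarrow> nat \<Rightarrow> nat list set" where
  "I_set r n = {\<alpha>. length \<alpha> = r \<and> sorted_wrt (\<ge>) \<alpha> \<and> set \<alpha> \<subseteq> {2..n-1} \<and> sum_list \<alpha> = 2 * n}"

end

theory Submission
  imports Defs
begin

text \<open>Every monomial T_xs of R_N satisfies x + length xs \<le> N + 2 for each of its indices x.
This holds for A_n, and one step of the recursion raises the bound by exactly one: L keeps the
number of factors and raises indices by one, while H adds one factor but splits an index a into
two indices 1 + l, 1 + a - l that are at most a. For \<alpha> as in the theorem, however,
\<alpha>_1 + r \<ge> (n - k) + (k + 4) = n + 4 > (n + 1) + 2, so T_\<alpha> does not occur in R_{n+1}.\<close>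

definition index_bound :: "nat \<Rightarrow> nat list \<Rightarrow> bool" where
  "index_bound N xs \<longleftrightarrow> (\<forall>x\<in>set xs. x + length xs \<le> N)"

lemma index_bound_mset_cong:
  "mset xs = mset ys \<Longrightarrow> index_bound N xs \<longleftrightarrow> index_bound N ys"
  unfolding index_bound_def by (metis set_mset_mset size_mset)

lemma coeffT_eq_0:
  assumes "\<forall>t\<in>set p. mset (snd t) \<noteq> mset \<alpha>"
  shows "coeffT p \<alpha> = 0"
proof -
  have "[c. (c, xs) \<leftarrow> p, mset xs = mset \<alpha>] = []"
    using assms by (induction p) auto
  then show ?thesis unfolding coeffT_def by (simp only: sum_list.Nil)
qed

lemma set_list_update2:
  assumes "y \<in> set (xs[i := a, j := b])" "i < length xs" "j < length xs"
  shows "y \<in> set xs \<or> y = a \<or> y = b"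
  using assms by (metis in_set_conv_nth length_list_update nth_list_update)

lemma index_bound_L_mono:
  assumes "index_bound N xs" and "t \<in> set (L_mono (c, xs))"
  shows "index_bound (Suc N) (snd t)"
proof -
  have "\<exists>i j. i < j \<and> j < length xs \<and> snd t = xs[i := xs ! i + 1, j := xs ! j + 1]"
    using assms(2) unfolding L_mono_def by (force simp: Suc_le_eq)
  then obtain i j where ij: "i < length xs" "j < length xs"
    and t: "snd t = xs[i := xs ! i + 1, j := xs ! j + 1]"
    by (meson order.strict_trans)
  have "x + length xs \<le> Suc N" if "x \<in> set (snd t)" for x
  proof -
    have "x \<in> set xs \<or> x = xs ! i + 1 \<or> x = xs ! j + 1"
      using set_list_update2 that t ij by metis
    then show ?thesis using assms(1) ij unfolding index_bound_def by force
  qed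
  then show ?thesis using t unfolding index_bound_def by simp
qed

lemma index_bound_H_mono:
  assumes "index_bound N xs" and "t \<in> set (H_mono (c, xs))"
  shows "index_bound (Suc N) (snd t)"
proof -
  obtain k l where kl: "k < length xs" "1 \<le> l" "l < xs ! k"
    and t: "snd t = (1 + l) # (1 + xs ! k - l) # (take k xs @ drop (Suc k) xs)"
    using assms(2) unfolding H_mono_def by auto
  have len: "length (snd t) = Suc (length xs)" using t kl by auto
  have "\<exists>y\<in>set xs. x \<le> y" if "x \<in> set (snd t)" for x
  proof -
    have "x = 1 + l \<or> x = 1 + xs ! k - l \<or> x \<in> set xs"
      using that t by (auto dest: in_set_takeD in_set_dropD)
    then have "x \<le> xs ! k \<or> x \<in> set xs" using kl by auto
    then show ?thesis using nth_mem[OF kl(1)] by blast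
  qed
  then show ?thesis using assms(1) len unfolding index_bound_def by fastforce
qed

lemma index_bound_L_op:
  assumes "\<forall>t\<in>set p. index_bound N (snd t)" and "t \<in> set (L_op p)"
  shows "index_bound (Suc N) (snd t)"
proof -
  obtain c xs where cxs: "(c, xs) \<in> set p" and t: "t \<in> set (L_mono (c, xs))"
    using assms(2) unfolding L_op_def by auto
  have "index_bound N xs" using assms(1) cxs by force
  then show ?thesis using t by (rule index_bound_L_mono)
qed

lemma index_bound_H_op:
  assumes "\<forall>t\<in>set p. index_bound N (snd t)" and "t \<in> set (H_op p)"
  shows "index_bound (Suc N) (snd t)"
proof -
  obtain c xs where cxs: "(c, xs) \<in> set p" and t: "t \<in> set (H_mono (c, xs))"
    using assms(2) unfolding H_op_def by auto
  have "index_bound N xs" using assms(1) cxs by force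
  then show ?thesis using t by (rule index_bound_H_mono)
qed

lemma index_bound_A_poly: "t \<in> set (A_poly n) \<Longrightarrow> index_bound (n + 3) (snd t)"
  unfolding A_poly_def index_bound_def by auto

lemma index_bound_R_poly: "t \<in> set (R_poly N) \<Longrightarrow> index_bound (N + 2) (snd t)"
proof (induction N arbitrary: t)
  case 0
  then show ?case by simp
next
  case (Suc n)
  then consider "t \<in> set (A_poly n)" | "t \<in> set (L_op (R_poly n))" | "t \<in> set (H_op (R_poly n))"
    by (auto split: if_splits)
  then show ?case
    using index_bound_A_poly index_bound_L_op[OF ballI[OF Suc.IH]]
      index_bound_H_op[OF ballI[OF Suc.IH]]
    by cases (auto simp: numeral_3_eq_3)
qed

theorem mainTheorem11:
  fixes n k r :: nat and \<alpha> :: "nat list"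
  assumes "n \<ge> 2" and "k \<le> n - 2"
    and "\<alpha> \<in> I_set r (n + 1)" and "r > 3 + k" and "\<alpha> ! 0 = n - k"
  shows "coeffT (R_poly (n + 1)) \<alpha> = 0"
proof (rule coeffT_eq_0, intro ballI notI)
  fix t assume t: "t \<in> set (R_poly (n + 1))" and eq: "mset (snd t) = mset \<alpha>"
  have len: "length \<alpha> = r" using assms(3) unfolding I_set_def by simp
  then have "n - k \<in> set \<alpha>" using assms(4,5) by (metis gr_zeroI not_less_zero nth_mem)
  moreover have "index_bound (n + 1 + 2) \<alpha>"
    using index_bound_R_poly[OF t] index_bound_mset_cong[OF eq] by blast
  ultimately have "n - k + r \<le> n + 1 + 2" using len unfolding index_bound_def by blast
  then show False using assms(1,2,4) by linarith
qed

end
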